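(* Let $(x_j)$ be a bounded sequence in a Banach space $X$ having a weak$^*$-cluster point $G\in X^{**}\setminus X$, and let $d=\operatorname{dist}(G,X)$. Set $\gamma=\max\{\frac1d,\frac{\|G\|+d}{2d},\sup_j\|x_j\|\}$. Then for every $\varepsilon>0$, $(x_j)$ has a $(\gamma+\varepsilon)$-wide-$(s)$ subsequence.
   Context: $X\subset X^{**}$ canonically; $\operatorname{dist}(G,X)=\inf_{x\in X}\|G-x\|$. A sequence $(b_j)$ is $\mu$-basic if $\|\sum_{j=1}^k c_jb_j\|\le\mu\|\sum_j c_jb_j\|$ for all $k$ and scalars $(c_j)$ with $\sum_jc_jb_j$ convergent. For $\lambda\ge1$, a finite or infinite sequence $(b_j)$ is $\lambda$-wide-$(s)$ if (a) it is $2\lambda$-basic; (b) $\|b_j\|\le\lambda$ for all $j$; (c) $|\sum_{j=k}^n c_j|\le\lambda\|\sum_{j=1}^n c_jb_j\|$ for all $1\le k\le n$ (within the length of the sequence) and scalars $c_1,\dots,c_n$. *)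

theory Defs
  imports "HOL-Analysis.Analysis"
begin

definition canon :: "'a::real_normed_vector \<Rightarrow> (('a \<Rightarrow>\<^sub>L real) \<Rightarrow>\<^sub>L real)" where
  "canon x = Blinfun (\<lambda>f. blinfun_apply f x)"

definition dist_to_X :: "(('a::real_normed_vector \<Rightarrow>\<^sub>L real) \<Rightarrow>\<^sub>L real) \<Rightarrow> real" where
  "dist_to_X G = (INF x. norm (G - canon x))"

text \<open>G is a weak*-cluster point of the sequence (canon (x j)): every basic weak*
  neighbourhood of G (finitely many functionals, radius e) contains x j for infinitely many j.\<close>
definition weak_star_cluster_point ::
  "(nat \<Rightarrow> 'a::real_normed_vector) \<Rightarrow> (('a \<Rightarrow>\<^sub>L real) \<Rightarrow>\<^sub>L real) \<Rightarrow> bool" where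
  "weak_star_cluster_point x G \<longleftrightarrow>
     (\<forall>F e N. finite F \<and> e > 0 \<longrightarrow>
        (\<exists>j\<ge>N. \<forall>f\<in>F. \<bar>blinfun_apply f (x j) - blinfun_apply G f\<bar> < e))"

definition is_basic :: "real \<Rightarrow> (nat \<Rightarrow> 'a::real_normed_vector) \<Rightarrow> bool" where
  "is_basic \<mu> b \<longleftrightarrow>
     (\<forall>c::nat \<Rightarrow> real. summable (\<lambda>j. c j *\<^sub>R b j) \<longrightarrow>
        (\<forall>k. norm (\<Sum>j<k. c j *\<^sub>R b j) \<le> \<mu> * norm (\<Sum>j. c j *\<^sub>R b j)))"

text \<open>Wide-(s) sequences (0-indexed).\<close>
definition wide_s :: "real \<Rightarrow> (nat \<Rightarrow> 'a::real_normed_vector) \<Rightarrow> bool" where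
  "wide_s lam b \<longleftrightarrow>
     is_basic (2 * lam) b \<and>
     (\<forall>j. norm (b j) \<le> lam) \<and>
     (\<forall>c::nat \<Rightarrow> real. \<forall>k n. k \<le> n \<longrightarrow>
        \<bar>\<Sum>j=k..n. c j\<bar> \<le> lam * norm (\<Sum>j\<le>n. c j *\<^sub>R b j))"

end

theory Submission
  imports Defs
begin

text \<open>Choose the subsequence \<open>b j = x (r j)\<close> inductively: at stage \<open>k\<close> fix finitely many norm-one
  functionals that almost norm the unit box in the span of \<open>b 0, \<dots>, b (k - 1)\<close> and \<open>G\<close>; since
  \<open>G\<close> is a weak* cluster point, all later terms can be taken within a summable error \<open>\<eta> j\<close> of \<open>G\<close>
  on these functionals. Then for \<open>k \<le> n\<close>, replacing the tail \<open>\<Sum>j=k..n. c j b j\<close> by \<open>s G\<close>, where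
  \<open>s = \<Sum>j=k..n. c j\<close>, gives a vector of norm at most \<open>\<parallel>\<Sum>j\<le>n. c j b j\<parallel> + \<theta> T\<close>, with \<open>T\<close> the
  largest tail sum \<open>\<bar>\<Sum>i=k..n. c i\<bar>\<close>. As \<open>\<parallel>u + s G\<parallel> \<ge> \<bar>s\<bar> d\<close> for \<open>u\<close> in \<open>X\<close>, this yields
  \<open>T (d - \<theta>) \<le> \<parallel>\<Sum>j\<le>n. c j b j\<parallel>\<close>, which is property (c); and \<open>\<parallel>u\<parallel> \<le> \<parallel>u + s G\<parallel> + \<bar>s\<bar> \<parallel>G\<parallel>\<close>
  bounds the partial sums by \<open>(d + \<parallel>G\<parallel>) / (d - \<theta>)\<close> times the whole sum. For small \<open>\<theta>\<close> these
  constants are at most \<open>\<gamma> + \<epsilon>\<close> and \<open>2 (\<gamma> + \<epsilon>)\<close>. The isometry of \<open>X\<close> into \<open>X\<^sup>*\<^sup>*\<close> used in the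
  last step is Hahn--Banach, obtained from Zorn's lemma on graphs of norm-dominated partial
  functionals.\<close>

section \<open>Hahn--Banach for the norm\<close>

definition norm_dominated_graph :: "('a::real_normed_vector \<times> real) set \<Rightarrow> bool" where
  "norm_dominated_graph g \<longleftrightarrow> subspace g \<and> (\<forall>(x, a)\<in>g. a \<le> norm x)"

lemma norm_dominated_graph_unique:
  assumes "norm_dominated_graph g" "(x, a) \<in> g" "(x, b) \<in> g"
  shows "a = b"
proof -
  have dom: "snd p \<le> norm (fst p)" if "p \<in> g" for p
    using assms(1) that unfolding norm_dominated_graph_def by auto
  have diff: "p - q \<in> g" if "p \<in> g" "q \<in> g" for p q
    using assms(1) that subspace_diff unfolding norm_dominated_graph_def by auto
  show ?thesis
    using dom[OF diff[OF assms(2,3)]] dom[OF diff[OF assms(3,2)]] by simp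
qed

lemma norm_dominated_graph_chain_Union:
  assumes "C \<noteq> {}" "\<And>g. g \<in> C \<Longrightarrow> norm_dominated_graph g"
    and chain: "\<And>g h. g \<in> C \<Longrightarrow> h \<in> C \<Longrightarrow> g \<subseteq> h \<or> h \<subseteq> g"
  shows "norm_dominated_graph (\<Union>C)"
proof -
  have sub: "subspace g" if "g \<in> C" for g
    using assms(2)[OF that] unfolding norm_dominated_graph_def by blast
  have "subspace (\<Union>C)"
    unfolding subspace_def
  proof (intro conjI ballI allI)
    show "0 \<in> \<Union>C" using assms(1) sub subspace_0 by blast
  next
    fix p q assume "p \<in> \<Union>C" "q \<in> \<Union>C"
    then obtain g where "g \<in> C" "p \<in> g" "q \<in> g" using chain by blast
    then show "p + q \<in> \<Union>C" using sub subspace_add by blast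
  next
    fix c :: real and p assume "p \<in> \<Union>C"
    then show "c *\<^sub>R p \<in> \<Union>C" using sub subspace_scale by blast
  qed
  then show ?thesis
    using assms(2) unfolding norm_dominated_graph_def by blast
qed

lemma norm_dominated_graph_extend:
  assumes g: "norm_dominated_graph g"
  shows "\<exists>g'. norm_dominated_graph g' \<and> g \<subseteq> g' \<and> (\<exists>a. (x\<^sub>1, a) \<in> g')"
proof -
  have sub: "subspace g" and dom: "\<And>x a. (x, a) \<in> g \<Longrightarrow> a \<le> norm x"
    using g unfolding norm_dominated_graph_def by auto
  have scale: "(t *\<^sub>R y, t * a) \<in> g" if "(y, a) \<in> g" for t y a
    using subspace_scale[OF sub that, of t] by simp
  have g0: "(0, 0) \<in> g" using subspace_0[OF sub] by (simp add: zero_prod_def)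
  have squeeze: "a - norm (y - x\<^sub>1) \<le> norm (z + x\<^sub>1) - b" if "(y, a) \<in> g" "(z, b) \<in> g" for y a z b
  proof -
    have "a + b \<le> norm (y + z)" using dom subspace_add[OF sub that] by simp
    also have "\<dots> \<le> norm (y - x\<^sub>1) + norm (z + x\<^sub>1)"
      using norm_triangle_ineq[of "y - x\<^sub>1" "z + x\<^sub>1"] by simp
    finally show ?thesis by simp
  qed
  define c where "c = (SUP (y, a)\<in>g. a - norm (y - x\<^sub>1))"
  have bdd: "bdd_above ((\<lambda>(y, a). a - norm (y - x\<^sub>1)) ` g)"
    using squeeze[OF _ g0] by (intro bdd_aboveI2[where M = "norm x\<^sub>1"]) auto
  have c_lower: "a - norm (y - x\<^sub>1) \<le> c" if "(y, a) \<in> g" for y a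
    unfolding c_def using cSUP_upper[OF that bdd] by simp
  have c_upper: "c \<le> norm (z + x\<^sub>1) - b" if "(z, b) \<in> g" for z b
    unfolding c_def using that g0 squeeze by (intro cSUP_least) auto
  define g' where "g' = {p + q |p q. p \<in> g \<and> q \<in> span {(x\<^sub>1, c)}}"
  have g'_iff: "p \<in> g' \<longleftrightarrow> (\<exists>y a t. (y, a) \<in> g \<and> p = (y + t *\<^sub>R x\<^sub>1, a + t * c))" for p
    unfolding g'_def span_singleton by force
  have "a + t * c \<le> norm (y + t *\<^sub>R x\<^sub>1)" if "(y, a) \<in> g" for y a t
  proof (cases t "0 :: real" rule: linorder_cases)
    case less
    define s where "s = - t"
    have s: "s > 0" using less s_def by simp
    have "a / s - c \<le> norm ((1 / s) *\<^sub>R y - x\<^sub>1)"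
      using c_lower[OF scale[OF that, of "1 / s"]] by simp
    then have "s * (a / s - c) \<le> s * norm ((1 / s) *\<^sub>R y - x\<^sub>1)"
      using s by (intro mult_left_mono) auto
    also have "\<dots> = norm (s *\<^sub>R ((1 / s) *\<^sub>R y - x\<^sub>1))"
      using s by simp
    also have "s *\<^sub>R ((1 / s) *\<^sub>R y - x\<^sub>1) = y + t *\<^sub>R x\<^sub>1"
      using s by (simp add: s_def algebra_simps)
    finally show ?thesis using s by (simp add: s_def algebra_simps)
  next
    case equal
    then show ?thesis using dom that by simp
  next
    case greater
    have "a / t + c \<le> norm ((1 / t) *\<^sub>R y + x\<^sub>1)"
      using c_upper[OF scale[OF that, of "1 / t"]] by simp
    then have "t * (a / t + c) \<le> t * norm ((1 / t) *\<^sub>R y + x\<^sub>1)"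
      using greater by (intro mult_left_mono) auto
    also have "\<dots> = norm (t *\<^sub>R ((1 / t) *\<^sub>R y + x\<^sub>1))"
      using greater by simp
    also have "t *\<^sub>R ((1 / t) *\<^sub>R y + x\<^sub>1) = y + t *\<^sub>R x\<^sub>1"
      using greater by (simp add: algebra_simps)
    finally show ?thesis using greater by (simp add: algebra_simps)
  qed
  moreover have "subspace g'"
    unfolding g'_def by (intro subspace_sums sub subspace_span)
  ultimately have "norm_dominated_graph g'"
    unfolding norm_dominated_graph_def by (auto simp: g'_iff)
  moreover have "g \<subseteq> g'"
  proof
    fix p assume "p \<in> g"
    then show "p \<in> g'" unfolding g'_iff by (intro exI[of _ "fst p"] exI[of _ "snd p"] exI[of _ 0]) simp
  qed
  moreover have "(x\<^sub>1, c) \<in> g'"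
    unfolding g'_iff using g0 by (intro exI[where x = 0] exI[where x = 1]) simp
  ultimately show ?thesis by blast
qed

lemma norm_dominated_graph_total_imp_blinfun:
  assumes g: "norm_dominated_graph g" and total: "\<And>x. \<exists>a. (x, a) \<in> g"
  shows "\<exists>f :: 'a::real_normed_vector \<Rightarrow>\<^sub>L real. norm f \<le> 1 \<and> (\<forall>(x, a)\<in>g. blinfun_apply f x = a)"
proof -
  define f where "f x = (THE a. (x, a) \<in> g)" for x
  have f_graph: "(x, f x) \<in> g" for x
    unfolding f_def using total[of x] norm_dominated_graph_unique[OF g] by (metis theI)
  have f_eq: "f x = a" if "(x, a) \<in> g" for x a
    using norm_dominated_graph_unique[OF g that f_graph] by simp
  have sub: "subspace g" and dom: "\<And>x a. (x, a) \<in> g \<Longrightarrow> a \<le> norm x"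
    using g unfolding norm_dominated_graph_def by auto
  have "(- x, - f x) \<in> g" for x
    using subspace_neg[OF sub f_graph[of x]] by simp
  then have "\<bar>f x\<bar> \<le> norm x" for x
    using dom[OF f_graph[of x]] dom[of "- x" "- f x"] by auto
  moreover have "bounded_linear f"
  proof (rule bounded_linear_intro[where K = 1])
    show "f (x + y) = f x + f y" for x y
      using f_eq subspace_add[OF sub f_graph f_graph] by simp
    show "f (r *\<^sub>R x) = r *\<^sub>R f x" for r x
      using f_eq subspace_scale[OF sub f_graph, of r] by simp
    show "norm (f x) \<le> norm x * 1" for x
      using \<open>\<bar>f x\<bar> \<le> norm x\<close> by simp
  qed
  ultimately show ?thesis
    using f_eq by (intro exI[of _ "Blinfun f"])
      (auto simp: bounded_linear_Blinfun_apply intro!: norm_blinfun_bound)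
qed

lemma exists_norming_functional:
  fixes x\<^sub>0 :: "'a::real_normed_vector"
  shows "\<exists>f :: 'a \<Rightarrow>\<^sub>L real. norm f \<le> 1 \<and> blinfun_apply f x\<^sub>0 = norm x\<^sub>0"
proof -
  define A where "A = {g. norm_dominated_graph g \<and> (x\<^sub>0, norm x\<^sub>0) \<in> g}"
  have "span {(x\<^sub>0, norm x\<^sub>0)} \<in> A"
    unfolding A_def norm_dominated_graph_def
  proof (intro CollectI conjI)
    show "\<forall>(x, a)\<in>span {(x\<^sub>0, norm x\<^sub>0)}. a \<le> norm x"
      unfolding span_singleton by (auto intro: mult_right_mono)
  qed (auto intro: subspace_span span_base)
  then have "\<exists>M\<in>A. \<forall>g\<in>A. M \<subseteq> g \<longrightarrow> g = M"
    by (intro subset_Zorn_nonempty)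
      (auto simp: A_def subset.chain_def intro!: norm_dominated_graph_chain_Union)
  then obtain M where M: "M \<in> A" and maximal: "\<And>g. g \<in> A \<Longrightarrow> M \<subseteq> g \<Longrightarrow> g = M"
    by blast
  have "\<exists>a. (x, a) \<in> M" for x
  proof -
    obtain g where "norm_dominated_graph g" "M \<subseteq> g" "\<exists>a. (x, a) \<in> g"
      using norm_dominated_graph_extend M unfolding A_def by blast
    then show ?thesis using maximal[of g] M unfolding A_def by blast
  qed
  then show ?thesis
    using norm_dominated_graph_total_imp_blinfun M unfolding A_def by fast
qed

section \<open>The canonical embedding into the bidual\<close>

lemma blinfun_apply_canon [simp]: "blinfun_apply (canon x) f = blinfun_apply f x"
  unfolding canon_def by (simp add: bounded_linear_Blinfun_apply)

lemma norm_canon [simp]: "norm (canon x) = norm x"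
proof (rule antisym)
  show "norm (canon x) \<le> norm x"
  proof (rule norm_blinfun_bound)
    show "norm (blinfun_apply (canon x) f) \<le> norm x * norm f" for f
      using norm_blinfun[of f x] by (simp add: mult.commute)
  qed simp
  obtain f where "norm f \<le> 1" "blinfun_apply f x = norm x"
    using exists_norming_functional by blast
  then show "norm x \<le> norm (canon x)"
    using norm_blinfun[of "canon x" f] mult_left_le[of "norm f" "norm (canon x)"] by simp
qed

lemma bounded_linear_canon: "bounded_linear canon"
proof (rule bounded_linear_intro[where K = 1])
  show "canon (x + y) = canon x + canon y" for x y
    by (rule blinfun_eqI) (simp add: blinfun.add_right blinfun.add_left)
  show "canon (r *\<^sub>R x) = r *\<^sub>R canon x" for r x
    by (rule blinfun_eqI) (simp add: blinfun.scaleR_right blinfun.scaleR_left)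
qed simp

lemmas canon_sum = linear_sum[OF bounded_linear.linear[OF bounded_linear_canon]]
  and canon_scaleR = linear_scale[OF bounded_linear.linear[OF bounded_linear_canon]]
  and canon_minus = linear_neg[OF bounded_linear.linear[OF bounded_linear_canon]]

lemma dist_to_X_le: "dist_to_X G \<le> norm (G - canon x)"
  unfolding dist_to_X_def by (rule cINF_lower) (auto intro: bdd_belowI[where m = 0])

lemma dist_to_X_pos:
  fixes G :: "('a::banach \<Rightarrow>\<^sub>L real) \<Rightarrow>\<^sub>L real"
  assumes "G \<notin> range canon"
  shows "dist_to_X G > 0"
proof -
  have "complete (range (canon :: 'a \<Rightarrow> _))"
    using complete_isometric_image[of 1 UNIV canon] bounded_linear_canon complete_UNIV by simp
  then have "infdist G (range canon) > 0"
    using assms by (intro infdist_pos_not_in_closed complete_imp_closed) auto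
  then show ?thesis
    unfolding dist_to_X_def infdist_def by (simp add: image_image dist_norm)
qed

lemma abs_mult_dist_to_X_le: "\<bar>s\<bar> * dist_to_X G \<le> norm (canon u + s *\<^sub>R G)"
proof (cases "s = 0")
  case False
  have "canon u + s *\<^sub>R G = s *\<^sub>R (G - canon (- (1 / s) *\<^sub>R u))"
    using False by (simp add: canon_scaleR canon_minus algebra_simps)
  then show ?thesis
    using dist_to_X_le mult_left_mono[OF dist_to_X_le abs_ge_zero] by simp
qed simp

section \<open>Finite almost-norming sets\<close>

definition almost_norming :: "'b set \<Rightarrow> real \<Rightarrow> ('b::real_normed_vector \<Rightarrow>\<^sub>L real) set \<Rightarrow> bool" where
  "almost_norming F \<delta> K \<longleftrightarrow> (\<forall>f\<in>F. norm f \<le> 1) \<and> (\<forall>w\<in>K. \<exists>f\<in>F. norm w - \<delta> \<le> blinfun_apply w f)"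

lemma norm_blinfun_almost_attained:
  fixes w :: "'b::real_normed_vector \<Rightarrow>\<^sub>L real"
  assumes "\<delta> > 0"
  shows "\<exists>f. norm f \<le> 1 \<and> norm w - \<delta> \<le> blinfun_apply w f"
proof -
  have "\<bar>blinfun_apply w v\<bar> / norm v \<le> norm w" for v
    using norm_blinfun[of w v] by (cases "v = 0") (auto simp: divide_le_eq)
  then have bdd: "bdd_above (range (\<lambda>v. \<bar>blinfun_apply w v\<bar> / norm v))"
    by (intro bdd_aboveI2)
  have "norm w - \<delta> < (SUP v. \<bar>blinfun_apply w v\<bar> / norm v)"
    using assms by (simp add: norm_blinfun.rep_eq onorm_def)
  then obtain v where v: "norm w - \<delta> < \<bar>blinfun_apply w v\<bar> / norm v"
    by (subst (asm) less_cSUP_iff[OF _ bdd]) auto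
  define f where "f = (sgn (blinfun_apply w v) / norm v) *\<^sub>R v"
  have "blinfun_apply w f = \<bar>blinfun_apply w v\<bar> / norm v"
    unfolding f_def by (simp add: blinfun.scaleR_right sgn_if)
  moreover have "norm f \<le> 1"
    unfolding f_def by (simp add: abs_sgn_eq divide_le_eq)
  ultimately show ?thesis
    using v by (intro exI[of _ f]) simp
qed

lemma compact_imp_finite_almost_norming:
  fixes K :: "('b::real_normed_vector \<Rightarrow>\<^sub>L real) set"
  assumes "compact K" "\<delta> > 0"
  shows "\<exists>F. finite F \<and> almost_norming F \<delta> K"
proof -
  obtain C where "finite C" "C \<subseteq> K" and cover: "K \<subseteq> (\<Union>w\<in>C. ball w (\<delta> / 4))"
    using compact_imp_seq_compact[OF assms(1)] seq_compact_imp_totally_bounded assms(2)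
    by (metis divide_pos_pos zero_less_numeral)
  obtain f :: "('b \<Rightarrow>\<^sub>L real) \<Rightarrow> 'b"
    where f: "\<And>w. norm (f w) \<le> 1" "\<And>w. norm w - \<delta> / 2 \<le> blinfun_apply w (f w)"
    using norm_blinfun_almost_attained[of "\<delta> / 2"] assms(2) by (metis half_gt_zero)
  have "\<exists>g\<in>f ` C. norm v - \<delta> \<le> blinfun_apply v g" if "v \<in> K" for v
  proof -
    obtain w where "w \<in> C" and close: "norm (v - w) < \<delta> / 4"
      using cover \<open>v \<in> K\<close> by (auto simp: dist_norm norm_minus_commute)
    have "\<bar>blinfun_apply (v - w) (f w)\<bar> \<le> norm (v - w)"
      using norm_blinfun[of "v - w" "f w"] f(1)[of w] mult_left_le[of "norm (f w)" "norm (v - w)"] by simp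
    then have "norm v - \<delta> \<le> blinfun_apply v (f w)"
      using f(2)[of w] close norm_triangle_ineq2[of v w] by (simp add: blinfun.diff_left)
    then show ?thesis using \<open>w \<in> C\<close> by blast
  qed
  then show ?thesis
    using \<open>finite C\<close> f(1) unfolding almost_norming_def by blast
qed

lemma almost_norming_scaled:
  assumes "almost_norming F \<delta> K" "w /\<^sub>R r \<in> K" "r > 0"
  shows "\<exists>f\<in>F. norm w - r * \<delta> \<le> blinfun_apply w f"
proof -
  obtain f where "f \<in> F" and f: "norm (w /\<^sub>R r) - \<delta> \<le> blinfun_apply (w /\<^sub>R r) f"
    using assms(1,2) unfolding almost_norming_def by blast
  have norm_eq: "norm w - r * \<delta> = r * (norm (w /\<^sub>R r) - \<delta>)"
    and apply_eq: "blinfun_apply w f = r * blinfun_apply (w /\<^sub>R r) f"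
    using assms(3) by (simp_all add: blinfun.scaleR_left field_simps)
  have "norm w - r * \<delta> \<le> blinfun_apply w f"
    unfolding norm_eq apply_eq using mult_left_mono[OF f] assms(3) by simp
  then show ?thesis using \<open>f \<in> F\<close> by blast
qed

definition unit_box_combinations :: "(nat \<Rightarrow> 'v::real_vector) \<Rightarrow> nat \<Rightarrow> 'v set" where
  "unit_box_combinations g m = {\<Sum>i<m. a i *\<^sub>R g i | a. \<forall>i<m. \<bar>a i\<bar> \<le> 1}"

lemma compact_unit_box_combinations:
  fixes g :: "nat \<Rightarrow> 'v::real_normed_vector"
  shows "compact (unit_box_combinations g m)"
proof (induction m)
  case 0
  then show ?case by (simp add: unit_box_combinations_def)
next
  case (Suc m)
  have "unit_box_combinations g (Suc m) =
      {u + v |u v. u \<in> unit_box_combinations g m \<and> v \<in> (\<lambda>t. t *\<^sub>R g m) ` {-1..1}}"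
  proof (intro equalityI subsetI)
    fix u assume "u \<in> unit_box_combinations g (Suc m)"
    then show "u \<in> {u + v |u v. u \<in> unit_box_combinations g m \<and> v \<in> (\<lambda>t. t *\<^sub>R g m) ` {-1..1}}"
      unfolding unit_box_combinations_def by fastforce
  next
    fix u assume "u \<in> {u + v |u v. u \<in> unit_box_combinations g m \<and> v \<in> (\<lambda>t. t *\<^sub>R g m) ` {-1..1}}"
    then obtain a t where a: "\<forall>i<m. \<bar>a i\<bar> \<le> 1" and t: "\<bar>t\<bar> \<le> 1"
      and u: "u = (\<Sum>i<m. a i *\<^sub>R g i) + t *\<^sub>R g m"
      unfolding unit_box_combinations_def by (fastforce simp: abs_le_iff)
    have "u = (\<Sum>i<Suc m. (a(m := t)) i *\<^sub>R g i)"
    proof -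
      have "(\<Sum>i<m. (a(m := t)) i *\<^sub>R g i) = (\<Sum>i<m. a i *\<^sub>R g i)"
        by (intro sum.cong) auto
      then show ?thesis unfolding u by simp
    qed
    moreover have "\<forall>i<Suc m. \<bar>(a(m := t)) i\<bar> \<le> 1"
      using a t by (simp add: less_Suc_eq)
    ultimately show "u \<in> unit_box_combinations g (Suc m)"
      unfolding unit_box_combinations_def by blast
  qed
  then show ?case
    by (simp only:) (intro compact_sums Suc.IH compact_continuous_image continuous_intros compact_Icc)
qed

section \<open>Replacing a tail by a multiple of \<open>G\<close>\<close>

definition max_tail_sum :: "(nat \<Rightarrow> real) \<Rightarrow> nat \<Rightarrow> real" where
  "max_tail_sum c n = Max ((\<lambda>k. \<bar>\<Sum>i=k..n. c i\<bar>) ` {..n})"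

lemma abs_tail_sum_le_max_tail_sum: "k \<le> n \<Longrightarrow> \<bar>\<Sum>i=k..n. c i\<bar> \<le> max_tail_sum c n"
  unfolding max_tail_sum_def by (intro Max_ge) auto

lemma max_tail_sum_attained: "\<exists>k\<le>n. max_tail_sum c n = \<bar>\<Sum>i=k..n. c i\<bar>"
proof -
  have "max_tail_sum c n \<in> (\<lambda>k. \<bar>\<Sum>i=k..n. c i\<bar>) ` {..n}"
    unfolding max_tail_sum_def by (intro Max_in) auto
  then show ?thesis by auto
qed

lemma max_tail_sum_nonneg: "0 \<le> max_tail_sum c n"
  using abs_tail_sum_le_max_tail_sum[of n n c] by linarith

lemma abs_le_max_tail_sum:
  assumes "j \<le> n"
  shows "\<bar>c j\<bar> \<le> 2 * max_tail_sum c n"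
proof -
  have "c j = (\<Sum>i=j..n. c i) - (\<Sum>i=Suc j..n. c i)"
    using assms by (simp add: sum.atLeast_Suc_atMost)
  moreover have "\<bar>\<Sum>i=Suc j..n. c i\<bar> \<le> max_tail_sum c n"
    using abs_tail_sum_le_max_tail_sum[of "Suc j" n c] max_tail_sum_nonneg[of c n]
    by (cases "Suc j \<le> n") auto
  ultimately show ?thesis
    using abs_tail_sum_le_max_tail_sum[OF assms, of c] by linarith
qed

definition collapse_tail ::
    "(nat \<Rightarrow> 'a::real_normed_vector) \<Rightarrow> (('a \<Rightarrow>\<^sub>L real) \<Rightarrow>\<^sub>L real) \<Rightarrow> (nat \<Rightarrow> real) \<Rightarrow> nat \<Rightarrow> nat
      \<Rightarrow> ('a \<Rightarrow>\<^sub>L real) \<Rightarrow>\<^sub>L real" where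
  "collapse_tail b G c k n = canon (\<Sum>j<k. c j *\<^sub>R b j) + (\<Sum>j=k..n. c j) *\<^sub>R G"

lemma norm_collapse_tail_le:
  assumes "k \<le> n" "norm f \<le> 1"
    and "norm (collapse_tail b G c k n) - e \<le> blinfun_apply (collapse_tail b G c k n) f"
  shows "norm (collapse_tail b G c k n)
    \<le> norm (\<Sum>j\<le>n. c j *\<^sub>R b j) + e + (\<Sum>j=k..n. \<bar>c j\<bar> * \<bar>blinfun_apply f (b j) - blinfun_apply G f\<bar>)"
proof -
  let ?Z = "\<Sum>j\<le>n. c j *\<^sub>R b j"
  have "{..n} = {..<k} \<union> {k..n}" using assms(1) by auto
  then have "?Z = (\<Sum>j<k. c j *\<^sub>R b j) + (\<Sum>j=k..n. c j *\<^sub>R b j)"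
    by (simp add: sum.union_disjoint ivl_disj_int_one(4))
  then have "blinfun_apply (collapse_tail b G c k n) f
      = blinfun_apply f ?Z - (\<Sum>j=k..n. c j * (blinfun_apply f (b j) - blinfun_apply G f))"
    by (simp add: collapse_tail_def blinfun.add_left blinfun.scaleR_left blinfun.add_right
        blinfun.sum_right blinfun.scaleR_right sum_distrib_right sum_subtractf right_diff_distrib)
  also have "\<dots> \<le> norm ?Z + (\<Sum>j=k..n. \<bar>c j\<bar> * \<bar>blinfun_apply f (b j) - blinfun_apply G f\<bar>)"
  proof -
    have "blinfun_apply f ?Z \<le> norm ?Z"
      using norm_blinfun[of f ?Z] assms(2) mult_left_le_one_le[of "norm ?Z" "norm f"] by simp
    moreover have "- (\<Sum>j=k..n. c j * (blinfun_apply f (b j) - blinfun_apply G f))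
        \<le> (\<Sum>j=k..n. \<bar>c j\<bar> * \<bar>blinfun_apply f (b j) - blinfun_apply G f\<bar>)"
      using sum_abs[of "\<lambda>j. c j * (blinfun_apply f (b j) - blinfun_apply G f)" "{k..n}"]
      by (simp add: abs_mult)
    ultimately show ?thesis by linarith
  qed
  finally show ?thesis using assms(3) by linarith
qed

definition stage_box ::
    "(nat \<Rightarrow> 'a::real_normed_vector) \<Rightarrow> (('a \<Rightarrow>\<^sub>L real) \<Rightarrow>\<^sub>L real) \<Rightarrow> nat
      \<Rightarrow> (('a \<Rightarrow>\<^sub>L real) \<Rightarrow>\<^sub>L real) set" where
  "stage_box b G k = unit_box_combinations (\<lambda>i. if i < k then canon (b i) else G) (Suc k)"

lemma stage_box_cong: "(\<And>i. i < k \<Longrightarrow> b i = b' i) \<Longrightarrow> stage_box b G k = stage_box b' G k"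
  unfolding stage_box_def by (simp cong: if_cong)

lemma norm_collapse_tail_le_of_almost_norming:
  assumes "k \<le> n"
    and norming: "almost_norming F (\<theta> / 4) (stage_box b G k)"
    and approx: "\<And>f j. f \<in> F \<Longrightarrow> k \<le> j \<Longrightarrow> \<bar>blinfun_apply f (b j) - blinfun_apply G f\<bar> \<le> \<eta> j"
    and small: "(\<Sum>j=k..n. \<eta> j) \<le> \<theta> / 4"
  shows "norm (collapse_tail b G c k n) \<le> norm (\<Sum>j\<le>n. c j *\<^sub>R b j) + \<theta> * max_tail_sum c n"
proof (cases "max_tail_sum c n = 0")
  case True
  then have "c j = 0" if "j \<le> n" for j
    using abs_le_max_tail_sum[OF that, of c] by simp
  then show ?thesis
    using \<open>k \<le> n\<close> True by (simp add: collapse_tail_def)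
next
  case False
  define T where "T = max_tail_sum c n"
  have T: "T > 0" using False max_tail_sum_nonneg[of c n] unfolding T_def by linarith
  define w where "w = collapse_tail b G c k n"
  define a where "a i = inverse (2 * T) * (if i < k then c i else (\<Sum>j=k..n. c j))" for i
  have "w /\<^sub>R (2 * T) = (\<Sum>i<Suc k. a i *\<^sub>R (if i < k then canon (b i) else G))"
    unfolding w_def collapse_tail_def a_def
    by (simp add: canon_sum canon_scaleR scaleR_add_right scaleR_sum_right)
  moreover have "\<forall>i<Suc k. \<bar>a i\<bar> \<le> 1"
    using T \<open>k \<le> n\<close> abs_le_max_tail_sum[of _ n c] abs_tail_sum_le_max_tail_sum[of k n c]
    by (auto simp: a_def T_def abs_mult field_simps less_Suc_eq)
  ultimately have "w /\<^sub>R (2 * T) \<in> stage_box b G k"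
    unfolding stage_box_def unit_box_combinations_def by blast
  moreover have "2 * T > 0" using T by simp
  ultimately obtain f where "f \<in> F" and f: "norm w - 2 * T * (\<theta> / 4) \<le> blinfun_apply w f"
    using almost_norming_scaled[OF norming] by blast
  have "norm f \<le> 1" using \<open>f \<in> F\<close> norming unfolding almost_norming_def by blast
  then have "norm w \<le> norm (\<Sum>j\<le>n. c j *\<^sub>R b j) + 2 * T * (\<theta> / 4)
      + (\<Sum>j=k..n. \<bar>c j\<bar> * \<bar>blinfun_apply f (b j) - blinfun_apply G f\<bar>)"
    using f unfolding w_def by (rule norm_collapse_tail_le[OF \<open>k \<le> n\<close>])
  also have "(\<Sum>j=k..n. \<bar>c j\<bar> * \<bar>blinfun_apply f (b j) - blinfun_apply G f\<bar>) \<le> (\<Sum>j=k..n. 2 * T * \<eta> j)"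
  proof (rule sum_mono)
    fix j assume "j \<in> {k..n}"
    then show "\<bar>c j\<bar> * \<bar>blinfun_apply f (b j) - blinfun_apply G f\<bar> \<le> 2 * T * \<eta> j"
      using approx[OF \<open>f \<in> F\<close>, of j] abs_le_max_tail_sum[of j n c] T
      unfolding T_def by (intro mult_mono) auto
  qed
  also have "\<dots> \<le> 2 * T * (\<theta> / 4)"
    using small T by (simp add: sum_distrib_left[symmetric])
  finally show ?thesis unfolding w_def T_def by simp
qed

lemma sum_half_powers_le_one: "(\<Sum>j\<in>J. (1 / 2 :: real) ^ Suc j) \<le> 1" if "finite J"
  using sum_le_suminf[OF sums_summable[OF power_half_series] that] sums_unique[OF power_half_series]
  by simp

lemma exists_subsequence_almost_norming_stages:
  fixes x :: "nat \<Rightarrow> 'a::real_normed_vector"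
  assumes cluster: "weak_star_cluster_point x G" and "\<delta> > 0" "\<And>j. \<eta> j > 0"
  shows "\<exists>r. strict_mono r \<and> (\<forall>k. \<exists>F. almost_norming F \<delta> (stage_box (x \<circ> r) G k) \<and>
    (\<forall>f\<in>F. \<forall>j\<ge>k. \<bar>blinfun_apply f (x (r j)) - blinfun_apply G f\<bar> < \<eta> j))"
proof -
  have "\<forall>l. \<exists>F. finite F \<and> almost_norming F \<delta> (stage_box (\<lambda>i. x (l ! i)) G (length l))"
    unfolding stage_box_def using \<open>\<delta> > 0\<close>
    by (auto intro!: compact_imp_finite_almost_norming compact_unit_box_combinations)
  then obtain N where N: "\<And>l. finite (N l)" "\<And>l. almost_norming (N l) \<delta> (stage_box (\<lambda>i. x (l ! i)) G (length l))"
    by metis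
  (* l lists the indices chosen so far; the next term must be close to G on the norming sets
     of all earlier stages, i.e. of all prefixes of l. *)
  define admissible where "admissible l j \<longleftrightarrow> (\<forall>i\<in>set l. i < j) \<and>
    (\<forall>k\<le>length l. \<forall>f\<in>N (take k l). \<bar>blinfun_apply f (x j) - blinfun_apply G f\<bar> < \<eta> (length l))" for l j
  have admissible_exists: "\<exists>j. admissible l j" for l
  proof -
    obtain j where j: "j \<ge> Suc (Max (insert 0 (set l)))"
      "\<forall>f\<in>(\<Union>k\<le>length l. N (take k l)). \<bar>blinfun_apply f (x j) - blinfun_apply G f\<bar> < \<eta> (length l)"
      using cluster[unfolded weak_star_cluster_point_def, rule_format,
          of "\<Union>k\<le>length l. N (take k l)" "\<eta> (length l)" "Suc (Max (insert 0 (set l)))"]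
        N(1) assms(3) by auto
    have "admissible l j"
      unfolding admissible_def
    proof (intro conjI ballI allI impI)
      fix i assume "i \<in> set l"
      then have "i \<le> Max (insert 0 (set l))" by simp
      then show "i < j" using j(1) by linarith
    qed (use j(2) in blast)
    then show ?thesis ..
  qed
  have "\<exists>r. \<forall>n. admissible (map r [0..<n]) (r n)"
  proof (rule dependent_wellorder_choice)
    show "admissible (map f [0..<n]) j = admissible (map g [0..<n]) j"
      if "\<And>m. m < n \<Longrightarrow> f m = g m" for j f g n
    proof -
      have "map f [0..<n] = map g [0..<n]" using that by (intro map_cong) auto
      then show ?thesis by (simp only:)
    qed
  qed (rule admissible_exists)
  then obtain r where r: "\<And>n. admissible (map r [0..<n]) (r n)"
    by blast
  have "strict_mono r"
    unfolding strict_mono_Suc_iff using r unfolding admissible_def by simp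
  moreover have "almost_norming (N (map r [0..<k])) \<delta> (stage_box (x \<circ> r) G k)" for k
    using N(2)[of "map r [0..<k]"] stage_box_cong[of k "\<lambda>i. x (map r [0..<k] ! i)" "x \<circ> r"] by simp
  moreover have "\<bar>blinfun_apply f (x (r j)) - blinfun_apply G f\<bar> < \<eta> j"
    if "f \<in> N (map r [0..<k])" "k \<le> j" for f j k
  proof -
    have "take k (map r [0..<j]) = map r [0..<k]"
      using \<open>k \<le> j\<close> by (simp add: take_map)
    then show ?thesis
      using r[of j] that unfolding admissible_def by fastforce
  qed
  ultimately show ?thesis by blast
qed

lemma exists_subsequence_collapse_tail_le:
  fixes x :: "nat \<Rightarrow> 'a::real_normed_vector"
  assumes "weak_star_cluster_point x G" and "\<theta> > 0"
  shows "\<exists>r. strict_mono r \<and> (\<forall>n k c. k \<le> n \<longrightarrow>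
    norm (collapse_tail (x \<circ> r) G c k n) \<le> norm (\<Sum>j\<le>n. c j *\<^sub>R (x \<circ> r) j) + \<theta> * max_tail_sum c n)"
proof -
  define \<eta> where "\<eta> j = \<theta> / 4 * (1 / 2) ^ Suc j" for j :: nat
  have "\<eta> j > 0" for j
    unfolding \<eta>_def using \<open>\<theta> > 0\<close> by simp
  then obtain r where "strict_mono r" and stages: "\<And>k. \<exists>F. almost_norming F (\<theta> / 4) (stage_box (x \<circ> r) G k) \<and>
      (\<forall>f\<in>F. \<forall>j\<ge>k. \<bar>blinfun_apply f (x (r j)) - blinfun_apply G f\<bar> < \<eta> j)"
    using exists_subsequence_almost_norming_stages[OF assms(1), of "\<theta> / 4" \<eta>] \<open>\<theta> > 0\<close> by auto
  have small: "(\<Sum>j=k..n. \<eta> j) \<le> \<theta> / 4" for k n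
    unfolding \<eta>_def sum_distrib_left[symmetric]
    using mult_left_mono[OF sum_half_powers_le_one[of "{k..n}"], of "\<theta> / 4"] \<open>\<theta> > 0\<close> by simp
  have "norm (collapse_tail (x \<circ> r) G c k n) \<le> norm (\<Sum>j\<le>n. c j *\<^sub>R (x \<circ> r) j) + \<theta> * max_tail_sum c n"
    if "k \<le> n" for n k c
  proof -
    obtain F where "almost_norming F (\<theta> / 4) (stage_box (x \<circ> r) G k)"
      and "\<forall>f\<in>F. \<forall>j\<ge>k. \<bar>blinfun_apply f (x (r j)) - blinfun_apply G f\<bar> < \<eta> j"
      using stages by blast
    then show ?thesis
      by (intro norm_collapse_tail_le_of_almost_norming[OF that _ _ small]) (auto intro: less_imp_le)
  qed
  with \<open>strict_mono r\<close> show ?thesis by blast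
qed

section \<open>Wide-(s) subsequences\<close>

lemma is_basic_of_partial_sums_le:
  assumes "\<And>c k n. k \<le> n \<Longrightarrow> norm (\<Sum>j<k. c j *\<^sub>R b j) \<le> \<mu> * norm (\<Sum>j\<le>n. c j *\<^sub>R b j)"
  shows "is_basic \<mu> b"
  unfolding is_basic_def
proof (intro allI impI)
  fix c k assume "summable (\<lambda>j. c j *\<^sub>R b j)"
  then have "(\<lambda>n. \<mu> * norm (\<Sum>j\<le>n. c j *\<^sub>R b j)) \<longlonglongrightarrow> \<mu> * norm (\<Sum>j. c j *\<^sub>R b j)"
    by (intro tendsto_mult_left tendsto_norm summable_LIMSEQ')
  then show "norm (\<Sum>j<k. c j *\<^sub>R b j) \<le> \<mu> * norm (\<Sum>j. c j *\<^sub>R b j)"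
    by (rule LIMSEQ_le_const) (use assms in blast)
qed

lemma max_tail_sum_mult_le:
  assumes "\<And>k. k \<le> n \<Longrightarrow>
    norm (collapse_tail b G c k n) \<le> norm (\<Sum>j\<le>n. c j *\<^sub>R b j) + \<theta> * max_tail_sum c n"
  shows "max_tail_sum c n * (dist_to_X G - \<theta>) \<le> norm (\<Sum>j\<le>n. c j *\<^sub>R b j)"
proof -
  obtain k where "k \<le> n" and k: "max_tail_sum c n = \<bar>\<Sum>i=k..n. c i\<bar>"
    using max_tail_sum_attained by blast
  have "max_tail_sum c n * dist_to_X G \<le> norm (collapse_tail b G c k n)"
    unfolding k collapse_tail_def by (rule abs_mult_dist_to_X_le)
  with assms[OF \<open>k \<le> n\<close>] show ?thesis
    by (simp add: algebra_simps)
qed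

lemma wide_s_of_collapse_tail_le:
  assumes est: "\<And>n k c. k \<le> n \<Longrightarrow>
      norm (collapse_tail b G c k n) \<le> norm (\<Sum>j\<le>n. c j *\<^sub>R b j) + \<theta> * max_tail_sum c n"
    and "0 \<le> \<theta>" "\<theta> < dist_to_X G"
    and lam_ge: "1 / (dist_to_X G - \<theta>) \<le> lam" "(norm G + dist_to_X G) / (2 * (dist_to_X G - \<theta>)) \<le> lam"
    and "\<And>j. norm (b j) \<le> lam"
  shows "wide_s lam b"
proof -
  define D where "D = dist_to_X G - \<theta>"
  have "D > 0" using \<open>\<theta> < dist_to_X G\<close> unfolding D_def by simp
  have T_le: "max_tail_sum c n \<le> norm (\<Sum>j\<le>n. c j *\<^sub>R b j) / D" for c n
    using max_tail_sum_mult_le[OF est] \<open>D > 0\<close> unfolding D_def by (simp add: le_divide_eq)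
  have tail: "\<bar>\<Sum>j=k..n. c j\<bar> \<le> lam * norm (\<Sum>j\<le>n. c j *\<^sub>R b j)" if "k \<le> n" for c k n
  proof -
    have "\<bar>\<Sum>j=k..n. c j\<bar> \<le> 1 / D * norm (\<Sum>j\<le>n. c j *\<^sub>R b j)"
      using abs_tail_sum_le_max_tail_sum[OF that, of c] T_le[of c n] by simp
    also have "\<dots> \<le> lam * norm (\<Sum>j\<le>n. c j *\<^sub>R b j)"
      using lam_ge(1) unfolding D_def by (intro mult_right_mono) auto
    finally show ?thesis .
  qed
  have head: "norm (\<Sum>j<k. c j *\<^sub>R b j) \<le> 2 * lam * norm (\<Sum>j\<le>n. c j *\<^sub>R b j)" if "k \<le> n" for c k n
  proof -
    define Z where "Z = norm (\<Sum>j\<le>n. c j *\<^sub>R b j)"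
    define s where "s = (\<Sum>j=k..n. c j)"
    have "norm (\<Sum>j<k. c j *\<^sub>R b j) = norm (collapse_tail b G c k n - s *\<^sub>R G)"
      by (simp add: collapse_tail_def s_def)
    also have "\<dots> \<le> norm (collapse_tail b G c k n) + \<bar>s\<bar> * norm G"
      using norm_triangle_ineq4[of "collapse_tail b G c k n" "s *\<^sub>R G"] by simp
    also have "\<dots> \<le> Z + (\<theta> + norm G) * max_tail_sum c n"
      using est[OF that, of c] abs_tail_sum_le_max_tail_sum[OF that, of c]
        mult_right_mono[of "\<bar>s\<bar>" "max_tail_sum c n" "norm G"]
      unfolding Z_def s_def by (simp add: algebra_simps)
    also have "\<dots> \<le> Z + (\<theta> + norm G) * (Z / D)"
      using T_le[of c n] \<open>0 \<le> \<theta>\<close> unfolding Z_def by (intro add_left_mono mult_left_mono) auto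
    also have "\<dots> = 2 * ((norm G + dist_to_X G) / (2 * D)) * Z"
      using \<open>D > 0\<close> unfolding D_def by (simp add: field_simps)
    also have "\<dots> \<le> 2 * lam * Z"
      using lam_ge(2) unfolding D_def Z_def by (intro mult_right_mono mult_left_mono) simp_all
    finally show ?thesis unfolding Z_def .
  qed
  show ?thesis
    unfolding wide_s_def using is_basic_of_partial_sums_le[OF head] tail assms(6) by blast
qed

lemma eventually_div_diff_less:
  fixes d :: real
  assumes "0 < d" "0 < \<epsilon>"
  shows "\<forall>\<^sub>F \<theta> in at_right 0. A / (d - \<theta>) < A / d + \<epsilon>"
proof (rule order_tendstoD(2))
  show "((\<lambda>\<theta>. A / (d - \<theta>)) \<longlongrightarrow> A / d) (at_right 0)"
    using assms(1) by (auto intro!: tendsto_eq_intros)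
qed (use assms(2) in simp)

theorem mainTheorem8:
  fixes x :: "nat \<Rightarrow> 'a::banach"
    and G :: "('a \<Rightarrow>\<^sub>L real) \<Rightarrow>\<^sub>L real"
  assumes "bounded (range x)"
    and "weak_star_cluster_point x G"
    and "G \<notin> range canon"
  shows "\<forall>\<epsilon>>0. \<exists>r. strict_mono r \<and>
           wide_s (max (1 / dist_to_X G)
                     (max ((norm G + dist_to_X G) / (2 * dist_to_X G)) (SUP j. norm (x j))) + \<epsilon>)
                  (x \<circ> r)"
proof (intro allI impI)
  fix \<epsilon> :: real assume "\<epsilon> > 0"
  define d where "d = dist_to_X G"
  define A where "A = (norm G + d) / 2"
  define \<gamma> where "\<gamma> = max (1 / d) (max ((norm G + d) / (2 * d)) (SUP j. norm (x j)))"
  have "d > 0" using dist_to_X_pos[OF assms(3)] unfolding d_def .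
  have "\<forall>\<^sub>F \<theta> in at_right 0. 0 < \<theta> \<and> \<theta> < d \<and> 1 / (d - \<theta>) < 1 / d + \<epsilon> \<and> A / (d - \<theta>) < A / d + \<epsilon>"
    using eventually_at_right_less order_tendstoD(2)[OF tendsto_ident_at \<open>d > 0\<close>]
      eventually_div_diff_less[OF \<open>d > 0\<close> \<open>\<epsilon> > 0\<close>] by (intro eventually_conj)
  then obtain \<theta> where \<theta>: "0 < \<theta>" "\<theta> < d" "1 / (d - \<theta>) < 1 / d + \<epsilon>" "A / (d - \<theta>) < A / d + \<epsilon>"
    using eventually_happens'[OF trivial_limit_at_right_real] by blast
  obtain r where "strict_mono r" and est: "\<And>n k c. k \<le> n \<Longrightarrow>
      norm (collapse_tail (x \<circ> r) G c k n) \<le> norm (\<Sum>j\<le>n. c j *\<^sub>R (x \<circ> r) j) + \<theta> * max_tail_sum c n"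
    using exists_subsequence_collapse_tail_le[OF assms(2) \<open>\<theta> > 0\<close>] by blast
  have "norm (x j) \<le> (SUP j. norm (x j))" for j
    using assms(1) by (intro cSUP_upper bounded_imp_bdd_above) (auto simp: bounded_norm_comp)
  then have "norm (x j) \<le> \<gamma> + \<epsilon>" for j
    using \<open>\<epsilon> > 0\<close> unfolding \<gamma>_def by (smt (verit) max.cobounded2)
  then have "wide_s (\<gamma> + \<epsilon>) (x \<circ> r)"
    using \<theta> \<open>\<epsilon> > 0\<close> unfolding \<gamma>_def A_def d_def
    by (intro wide_s_of_collapse_tail_le[OF est]) (auto simp: max.coboundedI1 max.coboundedI2)
  then show "\<exists>r. strict_mono r \<and> wide_s (max (1 / dist_to_X G)
      (max ((norm G + dist_to_X G) / (2 * dist_to_X G)) (SUP j. norm (x j))) + \<epsilon>) (x \<circ> r)"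
    using \<open>strict_mono r\<close> unfolding \<gamma>_def d_def by blast
qed

end
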